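(* Let $c_1\ge\dots\ge c_{m+1}\ge0$ and $d_1\ge\dots\ge d_m\ge0$ be integers. Let $(r_1,r_2,\dots)$ and $(s_1,s_2,\dots)$ be the conjugate partitions of $(c_1,\dots,c_{m+1})$ and $(d_1,\dots,d_m)$, and $r_0=m+1=s_0+1$. Let $g=\max\{i\ge0: r_i>s_i\}$ and $h=\min\{i\ge1: d_i<c_i\}$, with the convention $d_{m+1}=-\infty$. Then $g=c_h$ and $$\sum_{j=1}^{g}(r_j-s_j-1)=\sum_{j=h}^{m}(c_{j+1}-d_j).$$
   Context: The conjugate of a finite nonincreasing sequence $(a_1,\dots,a_n)$ of nonnegative integers is $(\bar a_1,\bar a_2,\dots)$ with $\bar a_k=\#\{i: a_i\ge k\}$ for $k\ge1$. *)

theory Defs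
  imports Main
begin

text \<open>For k = 0 this gives n, which agrees with
  the paper's conventions r_0 = m+1 and s_0 = m.\<close>
definition conj_seq :: "nat \<Rightarrow> (nat \<Rightarrow> nat) \<Rightarrow> nat \<Rightarrow> nat" where
  "conj_seq n a k = card {i \<in> {1..n}. k \<le> a i}"

end

theory Submission
  imports Defs
begin

text \<open>Let \<open>h\<close> be the first index with \<open>d h < c h\<close> (or \<open>m + 1\<close>). Below \<open>h\<close> the \<open>c\<close>'s are dominated by
  the \<open>d\<close>'s, while from \<open>h\<close> on all \<open>c\<close>'s and \<open>d\<close>'s are at most \<open>c h\<close> (the \<open>d\<close>'s strictly).
  Hence for \<open>j > c h\<close> every \<open>i\<close> counted by \<open>r j\<close> is counted by \<open>s j\<close>, while for
  \<open>j \<le> c h\<close> the first \<open>h\<close> resp. \<open>h - 1\<close> indices are always counted, so \<open>r j - s j - 1\<close>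
  compares the conjugates of the tails \<open>c (h+1), ..., c (m+1)\<close> and \<open>d h, ..., d m\<close>.
  Summing a conjugate over \<open>j = 1..c h\<close> gives back the sum of the entries.\<close>

lemma sum_card_ge_eq_sum:
  fixes f :: "'a \<Rightarrow> nat"
  assumes "finite I" and "\<And>i. i \<in> I \<Longrightarrow> f i \<le> g"
  shows "(\<Sum>j = 1..g. card {i \<in> I. j \<le> f i}) = (\<Sum>i\<in>I. f i)"
proof -
  have "(\<Sum>j = 1..g. card {i \<in> I. j \<le> f i})
      = (\<Sum>j = 1..g. \<Sum>i\<in>I. if j \<le> f i then 1 else 0)"
    using assms(1) by (simp add: sum.If_cases Collect_conj_eq Int_commute)
  also have "\<dots> = (\<Sum>i\<in>I. \<Sum>j = 1..g. if j \<le> f i then 1 else 0)"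
    by (rule sum.swap)
  also have "\<dots> = (\<Sum>i\<in>I. f i)"
  proof (rule sum.cong)
    fix i assume "i \<in> I"
    then have "{1..g} \<inter> {j. j \<le> f i} = {1..f i}"
      using assms(2)[of i] by auto
    then show "(\<Sum>j = 1..g. if j \<le> f i then 1 else 0) = f i"
      by (simp add: sum.If_cases)
  qed simp
  finally show ?thesis .
qed

lemma conj_seq_eq_add_card:
  assumes "k \<le> n" and "\<And>i. 1 \<le> i \<Longrightarrow> i \<le> k \<Longrightarrow> j \<le> a i"
  shows "conj_seq n a j = k + card {i \<in> {k+1..n}. j \<le> a i}"
proof -
  have "{i \<in> {1..n}. j \<le> a i} = {1..k} \<union> {i \<in> {k+1..n}. j \<le> a i}"
    using assms by auto
  moreover have "card ({1..k} \<union> {i \<in> {k+1..n}. j \<le> a i}) = k + card {i \<in> {k+1..n}. j \<le> a i}"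
    by (subst card_Un_disjoint) auto
  ultimately show ?thesis
    unfolding conj_seq_def by simp
qed

locale first_descent =
  fixes m h :: nat and c d :: "nat \<Rightarrow> nat"
  assumes c_mono: "\<And>i j. 1 \<le> i \<Longrightarrow> i \<le> j \<Longrightarrow> j \<le> m + 1 \<Longrightarrow> c j \<le> c i"
    and h_pos: "1 \<le> h" and h_le: "h \<le> m + 1"
    and c_le_d_before: "\<And>i. 1 \<le> i \<Longrightarrow> i < h \<Longrightarrow> c i \<le> d i"
    and d_less_c_from: "\<And>i. h \<le> i \<Longrightarrow> i \<le> m \<Longrightarrow> d i < c h"
begin

lemma conj_c_eq:
  assumes "j \<le> c h"
  shows "conj_seq (m + 1) c j = h + card {i \<in> {h+1..m+1}. j \<le> c i}"
  using assms h_le c_mono[of _ h]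
  by (intro conj_seq_eq_add_card) (auto intro: order.trans)

lemma conj_d_eq:
  assumes "j \<le> c h"
  shows "conj_seq m d j = (h - 1) + card {i \<in> {h..m}. j \<le> d i}"
proof -
  have "j \<le> d i" if "1 \<le> i" "i \<le> h - 1" for i
  proof -
    have "i < h"
      using that h_pos by simp
    then show ?thesis
      using assms c_mono[of i h] c_le_d_before[of i] that h_le by simp
  qed
  then show ?thesis
    using conj_seq_eq_add_card[of "h - 1" m j d] h_pos h_le by simp
qed

lemma conj_c_le_conj_d:
  assumes "c h < j"
  shows "conj_seq (m + 1) c j \<le> conj_seq m d j"
proof -
  have "i \<in> {i \<in> {1..m}. j \<le> d i}" if i: "i \<in> {i \<in> {1..m+1}. j \<le> c i}" for i
  proof -
    have "i < h"
    proof (rule ccontr)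
      assume "\<not> i < h"
      then have "c i \<le> c h"
        using c_mono[of h i] h_pos i by simp
      then show False
        using assms i by simp
    qed
    then have "c i \<le> d i" "i \<le> m"
      using c_le_d_before[of i] i h_le by auto
    then show ?thesis
      using i by auto
  qed
  then have "{i \<in> {1..m+1}. j \<le> c i} \<subseteq> {i \<in> {1..m}. j \<le> d i}"
    by (rule subsetI)
  then show ?thesis
    unfolding conj_seq_def by (simp add: card_mono)
qed

lemma greatest_conj_gap:
  "(GREATEST j. conj_seq m d j < conj_seq (m + 1) c j) = c h"
proof (rule Greatest_equality)
  have "{i \<in> {h..m}. c h \<le> d i} = {}"
    using d_less_c_from by force
  then have "conj_seq m d (c h) = h - 1"
    using conj_d_eq[of "c h"] by simp
  moreover have "h \<le> conj_seq (m + 1) c (c h)"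
    using conj_c_eq[of "c h"] by simp
  ultimately show "conj_seq m d (c h) < conj_seq (m + 1) c (c h)"
    using h_pos by simp
next
  show "j \<le> c h" if "conj_seq m d j < conj_seq (m + 1) c j" for j
    using that conj_c_le_conj_d[of j] by (meson leD leI)
qed

lemma sum_conj_gap:
  "(\<Sum>j = 1..c h. int (conj_seq (m + 1) c j) - int (conj_seq m d j) - 1)
    = (\<Sum>j = h..m. int (c (j + 1)) - int (d j))"
proof -
  have "(\<Sum>j = 1..c h. int (conj_seq (m + 1) c j) - int (conj_seq m d j) - 1)
      = (\<Sum>j = 1..c h. int (card {i \<in> {h+1..m+1}. j \<le> c i}) - int (card {i \<in> {h..m}. j \<le> d i}))"
    using conj_c_eq conj_d_eq h_pos by (intro sum.cong) auto
  also have "\<dots> = int (\<Sum>j = 1..c h. card {i \<in> {h+1..m+1}. j \<le> c i})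
      - int (\<Sum>j = 1..c h. card {i \<in> {h..m}. j \<le> d i})"
    by (simp add: sum_subtractf)
  also have "\<dots> = int (\<Sum>i = h+1..m+1. c i) - int (\<Sum>i = h..m. d i)"
  proof -
    have "(\<Sum>j = 1..c h. card {i \<in> {h+1..m+1}. j \<le> c i}) = (\<Sum>i = h+1..m+1. c i)"
      using c_mono[of h] h_pos by (intro sum_card_ge_eq_sum) auto
    moreover have "(\<Sum>j = 1..c h. card {i \<in> {h..m}. j \<le> d i}) = (\<Sum>i = h..m. d i)"
      using d_less_c_from by (intro sum_card_ge_eq_sum) (auto intro: less_imp_le)
    ultimately show ?thesis
      by simp
  qed
  also have "\<dots> = (\<Sum>j = h..m. int (c (j + 1)) - int (d j))"
  proof -
    have "(\<Sum>i = h+1..m+1. c i) = (\<Sum>j = h..m. c (j + 1))"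
      using sum.shift_bounds_cl_Suc_ivl[of c h m] by simp
    then show ?thesis
      by (simp add: sum_subtractf)
  qed
  finally show ?thesis .
qed

end

theorem lemma4p4:
  fixes m :: nat and c d :: "nat \<Rightarrow> nat"
  assumes c_mono: "\<And>i j. 1 \<le> i \<Longrightarrow> i \<le> j \<Longrightarrow> j \<le> m + 1 \<Longrightarrow> c j \<le> c i"
    and d_mono: "\<And>i j. 1 \<le> i \<Longrightarrow> i \<le> j \<Longrightarrow> j \<le> m \<Longrightarrow> d j \<le> d i"
  defines "r \<equiv> conj_seq (m + 1) c"
    and "s \<equiv> conj_seq m d"
  defines "g \<equiv> GREATEST i. s i < r i"
    and "h \<equiv> LEAST i. 1 \<le> i \<and> i \<le> m + 1 \<and> (i = m + 1 \<or> d i < c i)"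
  shows "g = c h \<and>
    (\<Sum>j = 1..g. int (r j) - int (s j) - 1) = (\<Sum>j = h..m. int (c (j + 1)) - int (d j))"
proof -
  let ?descent = "\<lambda>i. 1 \<le> i \<and> i \<le> m + 1 \<and> (i = m + 1 \<or> d i < c i)"
  have h: "?descent h"
    unfolding h_def by (rule LeastI[of _ "m + 1"]) simp
  have "c i \<le> d i" if "1 \<le> i" "i < h" for i
    using not_less_Least[of i ?descent] that h unfolding h_def by auto
  moreover have "d i < c h" if "h \<le> i" "i \<le> m" for i
    using h that d_mono[of h i] by auto
  ultimately interpret first_descent m h c d
    using c_mono h by unfold_locales auto
  have "g = c h"
    unfolding g_def r_def s_def by (rule greatest_conj_gap)
  with sum_conj_gap show ?thesis
    unfolding r_def s_def by simp
qed

end
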